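(* Let $\sigma\in[0,c]$ and let $\omega_k=(Z_k,E_k,-\lambda_k)$ be given. If for every choice of parameters $(W_k,\theta_k,\beta_k)\in\mathcal{S}(\sigma,A)$ the iteration below produces $\omega_{k+1}=\omega_k$, then $\omega_k=\omega_{k+1}\in\Omega^*$.
   Context: Let $A\in\mathbb{R}^{m\times d}$, $X\in\mathbb{R}^{m\times n}$, and let $f:\mathbb{R}^{d\times n}\to\mathbb{R}$, $g:\mathbb{R}^{m\times n}\to\mathbb{R}$ be convex. Consider the problem $\min_{Z,E} f(Z)+g(E)$ subject to $X=AZ+E$. Triples are written $\omega=(Z,E,-\lambda)$ with $\lambda\in\mathbb{R}^{m\times n}$ a Lagrange multiplier. $\Omega^*$ is the solution set: the set of $\omega^*=(Z^*,E^*,-\lambda^* )$ with $0\in\partial f(Z^* )+A^\top\lambda^*$, $0\in\partial g(E^* )+\lambda^*$, $AZ^*+E^*=X$. $\circ$ is the Hadamard product; $\beta^{-1}$ is the entrywise reciprocal; $\tfrac{\theta}{2}\circ\|M\|_F^2:=\tfrac12\sum_{ij}\theta_{ij}M_{ij}^2$. Iteration (D-LADMM), with parameters $W_k\in\mathbb{R}^{m\times d}$, $\theta_k\in\mathbb{R}^{d\times n}$, $\beta_k\in\mathbb{R}^{m\times n}$: $Z_{k+1}=\arg\min_Z\{ f(Z)+\tfrac{\theta_k}{2}\circ\|Z-Z_k+\theta_k^{-1}\circ W_k^\top(\lambda_k+\beta_k\circ(AZ_k+E_k-X))\|_F^2\}$, $E_{k+1}=\arg\min_E\{g(E)+\tfrac{\beta_k}{2}\circ\|E-X+AZ_{k+1}+\beta_k^{-1}\circ\lambda_k\|_F^2\}$,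 $\lambda_{k+1}=\lambda_k+\beta_k\circ(AZ_{k+1}+E_{k+1}-X)$. $\mathcal{S}(\sigma,A)$ is the set of $(W,\theta,\beta)$ with $\|W-A\|\le\sigma$ (spectral norm), $\theta,\beta$ entrywise positive, and $Z\mapsto\theta\circ Z-W^\top(\beta\circ(AZ))$ positive definite ($\langle\cdot(Z),Z\rangle>0$ for $Z\neq0$). Standing assumption: there is a constant $c$ such that $\mathcal{S}(\sigma,A)\ne\emptyset$ for all $0\le\sigma\le c$. *)

theory Defs
  imports "HOL-Analysis.Analysis"
begin

text \<open>Matrices are elements of real^'c^'r (rows indexed by 'r, columns by 'c).
  The library inner product / norm on this type is the Frobenius one.\<close>

definition had :: "real^'c^'r \<Rightarrow> real^'c^'r \<Rightarrow> real^'c^'r" where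
  "had P Q = (\<chi> i j. P$i$j * Q$i$j)"

definition entrywise_inv :: "real^'c^'r \<Rightarrow> real^'c^'r" where
  "entrywise_inv P = (\<chi> i j. inverse (P$i$j))"

definition wsqnorm :: "real^'c^'r \<Rightarrow> real^'c^'r \<Rightarrow> real" where
  "wsqnorm \<theta> M = (1/2) * (\<Sum>i\<in>UNIV. \<Sum>j\<in>UNIV. \<theta>$i$j * (M$i$j)^2)"

definition entrywise_pos :: "real^'c^'r \<Rightarrow> bool" where
  "entrywise_pos P \<longleftrightarrow> (\<forall>i j. P$i$j > 0)"

definition spec_norm :: "real^'c^'r \<Rightarrow> real" where
  "spec_norm M = onorm (\<lambda>x. M *v x)"

definition param_set ::
  "real \<Rightarrow> real^'d^'m \<Rightarrow> ((real^'d^'m) \<times> (real^'n^'d) \<times> (real^'n^'m)) set" where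
  "param_set \<sigma> A = {(W, \<theta>, \<beta>). spec_norm (W - A) \<le> \<sigma> \<and> entrywise_pos \<theta> \<and> entrywise_pos \<beta> \<and>
      (\<forall>Z::real^'n^'d. Z \<noteq> 0 \<longrightarrow> inner (had \<theta> Z - transpose W ** had \<beta> (A ** Z)) Z > 0)}"

definition subdiff :: "('a::real_inner \<Rightarrow> real) \<Rightarrow> 'a \<Rightarrow> 'a set" where
  "subdiff f x = {G. \<forall>y. f y \<ge> f x + inner G (y - x)}"

definition sol_set ::
  "(real^'n^'d \<Rightarrow> real) \<Rightarrow> (real^'n^'m \<Rightarrow> real) \<Rightarrow> real^'d^'m \<Rightarrow> real^'n^'m
    \<Rightarrow> ((real^'n^'d) \<times> (real^'n^'m) \<times> (real^'n^'m)) set" where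
  "sol_set f g A X = {(Z, E, mlam). let lam = - mlam in
      0 \<in> (\<lambda>G. G + transpose A ** lam) ` subdiff f Z \<and>
      0 \<in> (\<lambda>G. G + lam) ` subdiff g E \<and> A ** Z + E = X}"

definition Zobj ::
  "(real^'n^'d \<Rightarrow> real) \<Rightarrow> real^'d^'m \<Rightarrow> real^'n^'m \<Rightarrow> real^'d^'m \<Rightarrow> real^'n^'d \<Rightarrow> real^'n^'m
    \<Rightarrow> real^'n^'d \<Rightarrow> real^'n^'m \<Rightarrow> real^'n^'m \<Rightarrow> real^'n^'d \<Rightarrow> real" where
  "Zobj f A X W \<theta> \<beta> Zk Ek lamk Z = f Z + wsqnorm \<theta>
      (Z - Zk + had (entrywise_inv \<theta>) (transpose W ** (lamk + had \<beta> (A ** Zk + Ek - X))))"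

definition Eobj ::
  "(real^'n^'m \<Rightarrow> real) \<Rightarrow> real^'d^'m \<Rightarrow> real^'n^'m \<Rightarrow> real^'n^'m
    \<Rightarrow> real^'n^'d \<Rightarrow> real^'n^'m \<Rightarrow> real^'n^'m \<Rightarrow> real" where
  "Eobj g A X \<beta> Znew lamk E = g E + wsqnorm \<beta> (E - X + A ** Znew + had (entrywise_inv \<beta>) lamk)"

text \<open>One D-LADMM step maps (Zk,Ek,lk) to (Z1,E1,l1) (Z1, E1 are minimizers of the
  subproblems, which are unique since the objectives are strongly convex).\<close>
definition dladmm_step ::
  "(real^'n^'d \<Rightarrow> real) \<Rightarrow> (real^'n^'m \<Rightarrow> real) \<Rightarrow> real^'d^'m \<Rightarrow> real^'n^'m
   \<Rightarrow> real^'d^'m \<Rightarrow> real^'n^'d \<Rightarrow> real^'n^'m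
   \<Rightarrow> real^'n^'d \<Rightarrow> real^'n^'m \<Rightarrow> real^'n^'m
   \<Rightarrow> real^'n^'d \<Rightarrow> real^'n^'m \<Rightarrow> real^'n^'m \<Rightarrow> bool" where
  "dladmm_step f g A X W \<theta> \<beta> Zk Ek lamk Z1 E1 lam1 \<longleftrightarrow>
     (\<forall>Z. Zobj f A X W \<theta> \<beta> Zk Ek lamk Z1 \<le> Zobj f A X W \<theta> \<beta> Zk Ek lamk Z) \<and>
     (\<forall>E. Eobj g A X \<beta> Z1 lamk E1 \<le> Eobj g A X \<beta> Z1 lamk E) \<and>
     lam1 = lamk + had \<beta> (A ** Z1 + E1 - X)"

end

theory Submission
  imports Defs
begin

text \<open>It suffices to use one parameter choice with \<open>W = A\<close>, namely \<open>\<beta> = 1\<close> and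
  \<open>\<theta> = (K\<^sup>2 + 1)\<close> entrywise for a bound \<open>\<parallel>A Z\<parallel> \<le> K \<parallel>Z\<parallel>\<close>. Positivity of \<open>\<beta>\<close> turns
  \<open>\<lambda>\<^sub>k\<^sub>+\<^sub>1 = \<lambda>\<^sub>k\<close> into feasibility \<open>A Z + E = X\<close>, after which both subproblems are proximal
  steps \<open>argmin h + \<theta>/2\<circ>\<parallel>\<cdot> - x + \<theta>\<^sup>-\<^sup>1\<circ>v\<parallel>\<^sup>2\<close> centred at the current point \<open>x\<close>, and such a
  fixed point satisfies \<open>-v \<in> \<partial>h(x)\<close>, giving the two KKT inclusions.\<close>

lemma inner_transpose_matrix_mult:
  fixes A :: "real^'d^'m" and Y :: "real^'n^'m" and Z :: "real^'n^'d"
  shows "inner (transpose A ** Y) Z = inner Y (A ** Z)"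
proof -
  have "inner (transpose A ** Y) Z = (\<Sum>i\<in>UNIV. \<Sum>j\<in>UNIV. \<Sum>k\<in>UNIV. A$k$i * Y$k$j * Z$i$j)"
    unfolding inner_vec_def matrix_matrix_mult_def transpose_def
    by (simp add: sum_distrib_right)
  also have "\<dots> = (\<Sum>j\<in>UNIV. \<Sum>k\<in>UNIV. \<Sum>i\<in>UNIV. A$k$i * Y$k$j * Z$i$j)"
    by (subst sum.swap) (rule sum.cong[OF refl], rule sum.swap)
  also have "\<dots> = (\<Sum>k\<in>UNIV. \<Sum>j\<in>UNIV. \<Sum>i\<in>UNIV. A$k$i * Y$k$j * Z$i$j)"
    by (rule sum.swap)
  also have "\<dots> = inner Y (A ** Z)"
    unfolding inner_vec_def matrix_matrix_mult_def
    by (simp add: sum_distrib_left mult.assoc mult.left_commute)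
  finally show ?thesis .
qed

lemma spec_norm_0 [simp]: "spec_norm (0::real^'c^'r) = 0"
proof -
  have "(*v) (0::real^'c^'r) = (\<lambda>x. 0)" by (simp add: fun_eq_iff)
  then show ?thesis unfolding spec_norm_def by (simp only: onorm_zero)
qed

lemma param_set_contains_A:
  fixes A :: "real^'d^'m"
  assumes "0 \<le> \<sigma>"
  obtains \<theta> :: "real^'n^'d" and \<beta> :: "real^'n^'m" where "(A, \<theta>, \<beta>) \<in> param_set \<sigma> A"
proof -
  have "linear (\<lambda>Z::real^'n^'d. A ** Z)"
    by (rule linearI)
      (simp_all add: matrix_matrix_mult_def vec_eq_iff sum_distrib_left distrib_left sum.distrib
        mult.left_commute)
  then have "bounded_linear (\<lambda>Z::real^'n^'d. A ** Z)"
    by (simp add: linear_conv_bounded_linear)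
  then obtain K where K: "\<And>Z::real^'n^'d. norm (A ** Z) \<le> norm Z * K"
    using bounded_linear.bounded by blast
  define \<theta> :: "real^'n^'d" where "\<theta> = (\<chi> i j. K\<^sup>2 + 1)"
  define \<beta> :: "real^'n^'m" where "\<beta> = (\<chi> i j. 1)"
  have "inner (had \<theta> Z - transpose A ** had \<beta> (A ** Z)) Z > 0" if "Z \<noteq> 0" for Z
  proof -
    have "had \<theta> Z = (K\<^sup>2 + 1) *\<^sub>R Z" "had \<beta> (A ** Z) = A ** Z"
      unfolding had_def \<theta>_def \<beta>_def by (simp_all add: vec_eq_iff)
    then have "inner (had \<theta> Z - transpose A ** had \<beta> (A ** Z)) Z
        = (K\<^sup>2 + 1) * (norm Z)\<^sup>2 - (norm (A ** Z))\<^sup>2"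
      by (simp add: inner_diff_left inner_transpose_matrix_mult power2_norm_eq_inner)
    moreover have "(norm (A ** Z))\<^sup>2 \<le> (norm Z)\<^sup>2 * K\<^sup>2"
      using K[of Z] by (simp add: power_mono flip: power_mult_distrib)
    moreover have "(K\<^sup>2 + 1) * (norm Z)\<^sup>2 = (norm Z)\<^sup>2 * K\<^sup>2 + (norm Z)\<^sup>2"
      by (simp add: algebra_simps)
    moreover have "(norm Z)\<^sup>2 > 0" using that by simp
    ultimately show ?thesis by linarith
  qed
  then have "(A, \<theta>, \<beta>) \<in> param_set \<sigma> A"
    unfolding param_set_def entrywise_pos_def \<theta>_def \<beta>_def
    using assms by (simp add: add_nonneg_pos)
  then show ?thesis by (rule that)
qed

lemma had_0_right [simp]: "had \<beta> 0 = 0"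
  unfolding had_def by (simp add: vec_eq_iff)

lemma had_eq_0_iff:
  assumes "entrywise_pos \<beta>"
  shows "had \<beta> R = 0 \<longleftrightarrow> R = 0"
  using assms unfolding had_def entrywise_pos_def
  by (auto simp: vec_eq_iff) (metis less_irrefl)

lemma wsqnorm_scaleR_add_had_inverse:
  fixes \<theta> D v :: "real^'c^'r"
  assumes pos: "entrywise_pos \<theta>"
  shows "wsqnorm \<theta> (t *\<^sub>R D + had (entrywise_inv \<theta>) v)
     = wsqnorm \<theta> (had (entrywise_inv \<theta>) v) + t * inner D v + t\<^sup>2 * wsqnorm \<theta> D"
proof -
  have entry: "\<theta>$i$j * (t * D$i$j + inverse (\<theta>$i$j) * v$i$j)\<^sup>2
     = \<theta>$i$j * (inverse (\<theta>$i$j) * v$i$j)\<^sup>2 + 2 * t * (D$i$j * v$i$j) + t\<^sup>2 * (\<theta>$i$j * (D$i$j)\<^sup>2)"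
    for i j
  proof -
    have "\<theta>$i$j > 0" using pos unfolding entrywise_pos_def by blast
    then show ?thesis by (simp add: field_simps power2_eq_square)
  qed
  have "wsqnorm \<theta> (t *\<^sub>R D + had (entrywise_inv \<theta>) v) = (1/2) * (\<Sum>i\<in>UNIV. \<Sum>j\<in>UNIV.
     \<theta>$i$j * (inverse (\<theta>$i$j) * v$i$j)\<^sup>2 + 2 * t * (D$i$j * v$i$j) + t\<^sup>2 * (\<theta>$i$j * (D$i$j)\<^sup>2))"
    unfolding wsqnorm_def had_def entrywise_inv_def
    by (simp only: vec_lambda_beta vector_add_component vector_scaleR_component real_scaleR_def entry)
  then show ?thesis
    unfolding wsqnorm_def had_def entrywise_inv_def inner_vec_def
    by (simp add: sum.distrib sum_distrib_left algebra_simps)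
qed

lemma le_of_forall_le_add_mult:
  fixes a b C :: real
  assumes "\<And>t. 0 < t \<Longrightarrow> t \<le> 1 \<Longrightarrow> a \<le> b + t * C"
  shows "a \<le> b"
proof (rule ccontr)
  assume "\<not> a \<le> b"
  define t where "t = min 1 ((a - b) / (\<bar>C\<bar> + 1))"
  have t: "0 < t" "t \<le> 1" using \<open>\<not> a \<le> b\<close> unfolding t_def by auto
  have "t * (\<bar>C\<bar> + 1) \<le> a - b"
    unfolding t_def using \<open>\<not> a \<le> b\<close>
    by (smt (verit) divide_pos_pos min.cobounded2 mult_right_mono nonzero_eq_divide_eq abs_ge_zero)
  moreover have "t * C \<le> t * \<bar>C\<bar>" using t by (simp add: mult_left_mono)
  moreover have "t * (\<bar>C\<bar> + 1) = t * \<bar>C\<bar> + t" by (simp add: algebra_simps)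
  ultimately have "b + t * C < a" using t by linarith
  with assms[OF t] show False by simp
qed

text \<open>Comparing with the convex combination \<open>x + t(y - x)\<close> and letting \<open>t \<rightarrow> 0\<close>: the quadratic
  term contributes \<open>t\<^sup>2\<close>, the linear cross term \<open>t\<langle>y - x, v\<rangle>\<close> survives.\<close>

lemma prox_minimizer_in_subdiff:
  fixes h :: "real^'c^'r \<Rightarrow> real" and \<theta> v x :: "real^'c^'r"
  assumes cvx: "convex_on UNIV h" and pos: "entrywise_pos \<theta>"
    and min: "\<And>y. h x + wsqnorm \<theta> (had (entrywise_inv \<theta>) v)
                 \<le> h y + wsqnorm \<theta> (y - x + had (entrywise_inv \<theta>) v)"
  shows "- v \<in> subdiff h x"
  unfolding subdiff_def
proof (intro CollectI allI)
  fix y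
  define D where "D = y - x"
  have "h x \<le> h y + inner D v + t * wsqnorm \<theta> D" if t: "0 < t" "t \<le> 1" for t
  proof -
    have "x + t *\<^sub>R D = (1 - t) *\<^sub>R x + t *\<^sub>R y"
      unfolding D_def by (simp add: algebra_simps)
    then have convex: "h (x + t *\<^sub>R D) \<le> (1 - t) * h x + t * h y"
      using convex_onD[OF cvx, of t x y] t by simp
    have "h x \<le> h (x + t *\<^sub>R D) + t * inner D v + t\<^sup>2 * wsqnorm \<theta> D"
      using min[of "x + t *\<^sub>R D"] wsqnorm_scaleR_add_had_inverse[OF pos] by simp
    with convex have "t * h x \<le> t * (h y + inner D v + t * wsqnorm \<theta> D)"
      by (simp add: algebra_simps power2_eq_square)
    then show ?thesis using t by simp
  qed
  then have "h x \<le> h y + inner D v"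
    by (rule le_of_forall_le_add_mult)
  then show "h x + inner (- v) (y - x) \<le> h y"
    unfolding D_def by (simp add: inner_commute)
qed

theorem lemma3:
  fixes A :: "real^'d^'m" and X :: "real^'n^'m"
    and f :: "real^'n^'d \<Rightarrow> real" and g :: "real^'n^'m \<Rightarrow> real"
    and c \<sigma> :: real
    and Zk Z1 :: "real^'n^'d" and Ek E1 lamk lam1 :: "real^'n^'m"
  assumes "convex_on UNIV f" and "convex_on UNIV g"
    and standing: "\<forall>s. 0 \<le> s \<and> s \<le> c \<longrightarrow> param_set s A \<noteq> {}"
    and "0 \<le> \<sigma>" and "\<sigma> \<le> c"
    and fixed: "\<forall>(W, \<theta>, \<beta>) \<in> param_set \<sigma> A.
        dladmm_step f g A X W \<theta> \<beta> Zk Ek lamk Z1 E1 lam1 \<and> (Z1, E1, - lam1) = (Zk, Ek, - lamk)"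
  shows "(Zk, Ek, - lamk) = (Z1, E1, - lam1) \<and> (Zk, Ek, - lamk) \<in> sol_set f g A X"
proof -
  obtain \<theta> :: "real^'n^'d" and \<beta> where P: "(A, \<theta>, \<beta>) \<in> param_set \<sigma> A"
    using param_set_contains_A[OF \<open>0 \<le> \<sigma>\<close>] .
  have pos: "entrywise_pos \<theta>" "entrywise_pos \<beta>" using P unfolding param_set_def by auto
  from P fixed have step: "dladmm_step f g A X A \<theta> \<beta> Zk Ek lamk Zk Ek lamk"
    and eq: "Z1 = Zk" "E1 = Ek" "lam1 = lamk" by auto
  have feasible: "A ** Zk + Ek = X"
    using step had_eq_0_iff[OF pos(2)] unfolding dladmm_step_def by simp
  have "- (transpose A ** lamk) \<in> subdiff f Zk"
    using step feasible unfolding dladmm_step_def Zobj_def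
    by (intro prox_minimizer_in_subdiff[OF assms(1) pos(1)]) simp
  moreover have "- lamk \<in> subdiff g Ek"
  proof (rule prox_minimizer_in_subdiff[OF assms(2) pos(2)])
    have shift: "E - X + A ** Zk = E - Ek" for E using feasible by (auto simp: algebra_simps)
    show "g Ek + wsqnorm \<beta> (had (entrywise_inv \<beta>) lamk)
        \<le> g E + wsqnorm \<beta> (E - Ek + had (entrywise_inv \<beta>) lamk)" for E
      using step unfolding dladmm_step_def Eobj_def shift by simp
  qed
  ultimately have "(Zk, Ek, - lamk) \<in> sol_set f g A X"
    unfolding sol_set_def using feasible by (auto intro: rev_image_eqI)
  with eq show ?thesis by simp
qed

end
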